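(* Let $(X,\mathcal{A})$ be a measurable space, $f,g\in\mathcal{F}_{[0,1]}^{(X,\mathcal{A})}$ comonotone, $\star:[0,1]^2\to[0,1]$ continuous and non-decreasing in both arguments, and let the semicopula $\circledast$ be a continuous t-norm. Let $\alpha,\beta,\gamma,\lambda,\upsilon,\tau\in(0,\infty)$ satisfy $0<\alpha\lambda\le1$, $1\le\beta\upsilon<\infty$, $1\le\gamma\tau<\infty$, $\lambda\le\tau$, $\lambda\le\upsilon$, $\alpha\le\beta$, $\alpha\le\gamma$, and assume that $(\cdot)^{\alpha}$ is superdistributive over $\circledast$ and that $\circledast^{\lambda}$ dominates $\circledast$. Then for every monotone measure $m$ on $(X,\mathcal{A})$ with $m(X)=1$, \[ \big[\mathbf{I}_\circledast(m,(f\circledast g)^{\alpha})\big]^{\lambda}\ \ge\ \big[\mathbf{I}_\circledast(m,f^{\beta})\big]^{\upsilon}\circledast\big[\mathbf{I}_\circledast(m,g^{\gamma})\big]^{\tau}, \] where $(f\circledast g)(x)=f(x)\circledast g(x)$.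
   Context: A monotone measure on $(X,\mathcal{A})$ is $m:\mathcal{A}\to[0,\infty]$ with $m(\emptyset)=0$, $m(X)>0$, $m(A)\le m(B)$ for $A\subseteq B$. $\mathcal{F}_{[0,1]}^{(X,\mathcal{A})}$ is the set of $\mathcal{A}$-measurable $f:X\to[0,1]$. A semicopula is $\circledast:[0,1]^2\to[0,1]$, non-decreasing in both components, with neutral element $1$ and $a\circledast b\le\min(a,b)$; a t-norm is an associative commutative semicopula. $\mathbf{I}_\circledast(m,f)=\sup\{t\circledast m(\{f\ge t\}) : t\in[0,1]\}$. $(\cdot)^\alpha$ superdistributive over $\circledast$ means $(x\circledast y)^\alpha\ge x^\alpha\circledast y^\alpha$ for all $x,y$. For binary operations $A,B$, $A$ dominates $B$ if $A(B(a,b),B(c,d))\ge B(A(a,c),A(b,d))$ for all $a,b,c,d$; $\circledast^{\lambda}$ denotes the operation $(x,y)\mapsto(x\circledast y)^{\lambda}$. $f,g$ are comonotone if $(f(x)-f(y))(g(x)-g(y))\ge0$ for all $x,y$. *)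

theory Defs
  imports "HOL-Analysis.Analysis"
begin

definition monotone_measure :: "'a measure \<Rightarrow> ('a set \<Rightarrow> ennreal) \<Rightarrow> bool" where
  "monotone_measure M m \<longleftrightarrow>
     m {} = 0 \<and> m (space M) > 0 \<and>
     (\<forall>A\<in>sets M. \<forall>B\<in>sets M. A \<subseteq> B \<longrightarrow> m A \<le> m B)"

definition F01 :: "'a measure \<Rightarrow> ('a \<Rightarrow> real) set" where
  "F01 M = {f. f \<in> borel_measurable M \<and> (\<forall>x\<in>space M. f x \<in> {0..1})}"

definition semicopula :: "(real \<Rightarrow> real \<Rightarrow> real) \<Rightarrow> bool" where
  "semicopula S \<longleftrightarrow>
     (\<forall>x\<in>{0..1}. \<forall>y\<in>{0..1}. S x y \<in> {0..1}) \<and>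
     (\<forall>x\<in>{0..1}. \<forall>x'\<in>{0..1}. \<forall>y\<in>{0..1}. \<forall>y'\<in>{0..1}.
        x \<le> x' \<longrightarrow> y \<le> y' \<longrightarrow> S x y \<le> S x' y') \<and>
     (\<forall>x\<in>{0..1}. S x 1 = x \<and> S 1 x = x) \<and>
     (\<forall>x\<in>{0..1}. \<forall>y\<in>{0..1}. S x y \<le> min x y)"

definition tnorm :: "(real \<Rightarrow> real \<Rightarrow> real) \<Rightarrow> bool" where
  "tnorm S \<longleftrightarrow> semicopula S \<and>
     (\<forall>x\<in>{0..1}. \<forall>y\<in>{0..1}. \<forall>z\<in>{0..1}. S (S x y) z = S x (S y z)) \<and>
     (\<forall>x\<in>{0..1}. \<forall>y\<in>{0..1}. S x y = S y x)"

definition continuous_op :: "(real \<Rightarrow> real \<Rightarrow> real) \<Rightarrow> bool" where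
  "continuous_op S \<longleftrightarrow> continuous_on ({0..1} \<times> {0..1}) (\<lambda>(x, y). S x y)"

definition nondecreasing_op :: "(real \<Rightarrow> real \<Rightarrow> real) \<Rightarrow> bool" where
  "nondecreasing_op S \<longleftrightarrow>
     (\<forall>x\<in>{0..1}. \<forall>x'\<in>{0..1}. \<forall>y\<in>{0..1}. \<forall>y'\<in>{0..1}.
        x \<le> x' \<longrightarrow> y \<le> y' \<longrightarrow> S x y \<le> S x' y')"

text \<open>Seminormed-type integral I_S(m,f) = sup_{t in [0,1]} S t (m {f >= t}).
  Under m(X)=1 all values m(A), A measurable, lie in [0,1], so enn2real is exact.\<close>
definition I_sc :: "(real \<Rightarrow> real \<Rightarrow> real) \<Rightarrow> 'a measure \<Rightarrow> ('a set \<Rightarrow> ennreal)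
                    \<Rightarrow> ('a \<Rightarrow> real) \<Rightarrow> real" where
  "I_sc S M m f = (SUP t\<in>{0..1}. S t (enn2real (m {x\<in>space M. f x \<ge> t})))"

definition superdistributive_pow :: "real \<Rightarrow> (real \<Rightarrow> real \<Rightarrow> real) \<Rightarrow> bool" where
  "superdistributive_pow a S \<longleftrightarrow>
     (\<forall>x\<in>{0..1}. \<forall>y\<in>{0..1}. (S x y) powr a \<ge> S (x powr a) (y powr a))"

definition dominates :: "(real \<Rightarrow> real \<Rightarrow> real) \<Rightarrow> (real \<Rightarrow> real \<Rightarrow> real) \<Rightarrow> bool" where
  "dominates A B \<longleftrightarrow>
     (\<forall>a\<in>{0..1}. \<forall>b\<in>{0..1}. \<forall>c\<in>{0..1}. \<forall>d\<in>{0..1}.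
        A (B a b) (B c d) \<ge> B (A a c) (A b d))"

definition comonotone :: "'a set \<Rightarrow> ('a \<Rightarrow> real) \<Rightarrow> ('a \<Rightarrow> real) \<Rightarrow> bool" where
  "comonotone X f g \<longleftrightarrow> (\<forall>x\<in>X. \<forall>y\<in>X. (f x - f y) * (g x - g y) \<ge> 0)"

end

theory Submission imports Defs begin

text \<open>
  For levels \<open>s, u\<close> write \<open>p = m{f\<^sup>\<beta> \<ge> s}\<close> and \<open>q = m{g\<^sup>\<gamma> \<ge> u}\<close>; then
  \<open>(s \<circledast> p) \<circledast> (u \<circledast> q) = (s \<circledast> u) \<circledast> (p \<circledast> q)\<close>. Superdistributivity of \<open>(\<cdot>)\<^sup>\<alpha>\<close> bounds
  \<open>s \<circledast> u\<close> by the level \<open>t = (s\<^sup>1\<^sup>/\<^sup>\<beta> \<circledast> u\<^sup>1\<^sup>/\<^sup>\<gamma>)\<^sup>\<alpha>\<close> of \<open>(f \<circledast> g)\<^sup>\<alpha>\<close>. Comonotone level sets are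
  nested, so \<open>p \<circledast> q \<le> min p q\<close> is at most the measure of their intersection, which lies in
  \<open>{(f \<circledast> g)\<^sup>\<alpha> \<ge> t}\<close>; hence each such product is below \<open>I((f \<circledast> g)\<^sup>\<alpha>)\<close>. Dominance of
  \<open>\<circledast>\<^sup>\<lambda>\<close> over \<open>\<circledast>\<close> gives \<open>a\<^sup>\<upsilon> \<circledast> c\<^sup>\<tau> \<le> a\<^sup>\<lambda> \<circledast> c\<^sup>\<lambda> \<le> (a \<circledast> c)\<^sup>\<lambda>\<close>, and continuity of \<open>\<circledast>\<close> lets
  the suprema defining \<open>I(f\<^sup>\<beta>)\<close> and \<open>I(g\<^sup>\<gamma>)\<close> pass through the t-norm.
\<close>

lemma semicopula_range:
  "semicopula S \<Longrightarrow> x \<in> {0..1} \<Longrightarrow> y \<in> {0..1} \<Longrightarrow> S x y \<in> {0..1}"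
  unfolding semicopula_def by blast

lemma semicopula_mono:
  "semicopula S \<Longrightarrow> x \<in> {0..1} \<Longrightarrow> x' \<in> {0..1} \<Longrightarrow> y \<in> {0..1} \<Longrightarrow> y' \<in> {0..1} \<Longrightarrow>
   x \<le> x' \<Longrightarrow> y \<le> y' \<Longrightarrow> S x y \<le> S x' y'"
  unfolding semicopula_def by blast

lemma semicopula_one_right: "semicopula S \<Longrightarrow> x \<in> {0..1} \<Longrightarrow> S x 1 = x"
  and semicopula_one_left: "semicopula S \<Longrightarrow> x \<in> {0..1} \<Longrightarrow> S 1 x = x"
  unfolding semicopula_def by blast+

lemma semicopula_le_min:
  "semicopula S \<Longrightarrow> x \<in> {0..1} \<Longrightarrow> y \<in> {0..1} \<Longrightarrow> S x y \<le> min x y"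
  unfolding semicopula_def by blast

lemma tnorm_assoc:
  "tnorm S \<Longrightarrow> x \<in> {0..1} \<Longrightarrow> y \<in> {0..1} \<Longrightarrow> z \<in> {0..1} \<Longrightarrow> S (S x y) z = S x (S y z)"
  unfolding tnorm_def by blast

lemma tnorm_commute: "tnorm S \<Longrightarrow> x \<in> {0..1} \<Longrightarrow> y \<in> {0..1} \<Longrightarrow> S x y = S y x"
  unfolding tnorm_def by blast

lemma tnorm_semicopula: "tnorm S \<Longrightarrow> semicopula S"
  unfolding tnorm_def by blast

lemma tnorm_swap_middle:
  assumes "tnorm S" "a \<in> {0..1}" "b \<in> {0..1}" "c \<in> {0..1}" "d \<in> {0..1}"
  shows "S (S a b) (S c d) = S (S a c) (S b d)"
proof -
  note S01 = semicopula_range[OF tnorm_semicopula[OF assms(1)]]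
  have "S (S a b) (S c d) = S a (S b (S c d))"
    using tnorm_assoc[OF assms(1-3) S01[OF assms(4,5)]] .
  also have "S b (S c d) = S (S b c) d"
    using tnorm_assoc[OF assms(1,3-5)] by simp
  also have "S b c = S c b"
    using tnorm_commute[OF assms(1,3,4)] .
  also have "S a (S (S c b) d) = S (S a c) (S b d)"
    using tnorm_assoc[OF assms(1,4,3,5)] tnorm_assoc[OF assms(1,2,4) S01[OF assms(3,5)]] by simp
  finally show ?thesis .
qed

lemma powr_in_unit_interval: "x \<in> {0..1} \<Longrightarrow> (e::real) \<ge> 0 \<Longrightarrow> x powr e \<in> {0..1}"
  by (auto intro: powr_le1)

text \<open>The dominance inequality is only needed at the arguments \<open>(a, 1, 1, c)\<close>.\<close>
lemma dominates_powr_le: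
  assumes "semicopula S" "dominates (\<lambda>x y. (S x y) powr lam) S"
    and "0 < lam" "lam \<le> \<upsilon>" "lam \<le> \<tau>" "a \<in> {0..1}" "c \<in> {0..1}"
  shows "S (a powr \<upsilon>) (c powr \<tau>) \<le> (S a c) powr lam"
proof -
  have "a powr \<upsilon> \<le> a powr lam" "c powr \<tau> \<le> c powr lam"
    using assms(4-7) by (auto intro: powr_mono')
  hence "S (a powr \<upsilon>) (c powr \<tau>) \<le> S (a powr lam) (c powr lam)"
    using assms(3-7) by (intro semicopula_mono[OF assms(1)]) (auto intro!: powr_le1)
  also have "\<dots> = S ((S a 1) powr lam) ((S 1 c) powr lam)"
    using assms(1,6,7) by (simp add: semicopula_one_left semicopula_one_right)
  also have "\<dots> \<le> (S (S a 1) (S 1 c)) powr lam"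
    using assms(2,6,7) unfolding dominates_def by simp
  also have "\<dots> = (S a c) powr lam"
    using assms(1,6,7) by (simp add: semicopula_one_left semicopula_one_right)
  finally show ?thesis .
qed

lemma superdistributive_pow_root_bound:
  assumes "semicopula S" "superdistributive_pow \<alpha> S"
    and "0 < \<alpha>" "\<alpha> \<le> \<beta>" "\<alpha> \<le> \<gamma>" "s \<in> {0..1}" "u \<in> {0..1}"
  shows "S s u \<le> (S (s powr (1/\<beta>)) (u powr (1/\<gamma>))) powr \<alpha>"
proof -
  have "0 < \<beta>" "0 < \<gamma>"
    using assms(3-5) by linarith+
  hence roots: "s powr (1/\<beta>) \<in> {0..1}" "u powr (1/\<gamma>) \<in> {0..1}"
    using assms(6,7) by (auto intro!: powr_le1)
  have "s powr 1 \<le> s powr (\<alpha>/\<beta>)"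
    using assms(3,4,6) by (intro powr_mono') auto
  moreover have "u powr 1 \<le> u powr (\<alpha>/\<gamma>)"
    using assms(3,5,7) by (intro powr_mono') auto
  ultimately have "s \<le> (s powr (1/\<beta>)) powr \<alpha>" "u \<le> (u powr (1/\<gamma>)) powr \<alpha>"
    using assms(6,7) by (simp_all add: powr_powr)
  moreover have "(s powr (1/\<beta>)) powr \<alpha> \<in> {0..1}" "(u powr (1/\<gamma>)) powr \<alpha> \<in> {0..1}"
    using roots assms(3) by (auto intro!: powr_le1)
  ultimately have "S s u \<le> S ((s powr (1/\<beta>)) powr \<alpha>) ((u powr (1/\<gamma>)) powr \<alpha>)"
    using semicopula_mono[OF assms(1,6) _ assms(7)] by blast
  also have "\<dots> \<le> (S (s powr (1/\<beta>)) (u powr (1/\<gamma>))) powr \<alpha>"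
    using assms(2) roots unfolding superdistributive_pow_def by blast
  finally show ?thesis .
qed

lemma continuous_op_compose:
  assumes "continuous_op S" "continuous_on A h" "continuous_on A k"
    and "h ` A \<subseteq> {0..1}" "k ` A \<subseteq> {0..1}"
  shows "continuous_on A (\<lambda>x. S (h x) (k x))"
proof -
  have "continuous_on A (\<lambda>x. (\<lambda>(y, z). S y z) (h x, k x))"
  proof (rule continuous_on_compose2[where t="{0..1} \<times> {0..1}"])
    show "continuous_on ({0..1} \<times> {0..1}) (\<lambda>(y, z). S y z)"
      using assms(1) unfolding continuous_op_def .
    show "continuous_on A (\<lambda>x. (h x, k x))"
      using assms(2,3) by (rule continuous_on_Pair)
  qed (use assms(4,5) in auto)
  thus ?thesis by simp
qed

text \<open>Clamping both arguments to \<open>[0,1]\<close> extends \<open>S\<close> to a continuous function on the plane.\<close>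
lemma continuous_op_measurable:
  assumes "continuous_op S" "f \<in> F01 M" "g \<in> F01 M"
  shows "(\<lambda>x. S (f x) (g x)) \<in> borel_measurable M"
proof -
  define clamp :: "real \<Rightarrow> real" where "clamp t = max 0 (min 1 t)" for t
  have clamp_cont: "continuous_on UNIV clamp"
    unfolding clamp_def by (intro continuous_intros)
  have clamp_range: "clamp ` UNIV \<subseteq> {0..1}"
    unfolding clamp_def by auto
  have "continuous_on UNIV (\<lambda>p. S (clamp (fst p)) (clamp (snd p)))"
    using continuous_on_compose2[OF clamp_cont continuous_on_fst[OF continuous_on_id]]
      continuous_on_compose2[OF clamp_cont continuous_on_snd[OF continuous_on_id]] clamp_range
    by (intro continuous_op_compose[OF assms(1)]) auto
  moreover have "(\<lambda>x. (f x, g x)) \<in> borel_measurable M"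
    using assms(2,3) unfolding F01_def by (intro borel_measurable_Pair) auto
  ultimately have "(\<lambda>x. S (clamp (f x)) (clamp (g x))) \<in> borel_measurable M"
    using borel_measurable_continuous_on[where f="\<lambda>p. S (clamp (fst p)) (clamp (snd p))"
        and g="\<lambda>x. (f x, g x)"] by simp
  moreover have "\<And>x. x \<in> space M \<Longrightarrow> S (clamp (f x)) (clamp (g x)) = S (f x) (g x)"
    using assms(2,3) unfolding F01_def clamp_def by auto
  ultimately show ?thesis
    by (subst measurable_cong[where g="\<lambda>x. S (f x) (g x)", symmetric])
qed

lemma continuous_on_Sup_le:
  fixes P :: "real \<Rightarrow> real"
  assumes "continuous_on {0..1} P" "X \<subseteq> {0..1}" "X \<noteq> {}" "\<forall>x\<in>X. P x \<le> K"
  shows "P (Sup X) \<le> K"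
proof -
  have "closed ({0..1} \<inter> P -` {..K})"
    by (rule continuous_closed_preimage[OF assms(1)]) auto
  moreover have "X \<subseteq> {0..1} \<inter> P -` {..K}"
    using assms(2,4) by auto
  ultimately have "closure X \<subseteq> {0..1} \<inter> P -` {..K}"
    by (rule closure_minimal[rotated])
  moreover have "bdd_above X"
    by (rule bdd_above_mono[OF bdd_above_Icc assms(2)])
  ultimately show ?thesis
    using closure_contains_Sup[OF assms(3)] by auto
qed

lemma Sup_in_unit_interval:
  fixes X :: "real set"
  assumes "X \<subseteq> {0..1}" "X \<noteq> {}"
  shows "Sup X \<in> {0..1}"
proof -
  obtain x where "x \<in> X" using assms(2) by blast
  moreover have "bdd_above X" by (rule bdd_above_mono[OF bdd_above_Icc assms(1)])
  ultimately have "x \<le> Sup X" by (rule cSup_upper)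
  moreover have "Sup X \<le> 1" using assms by (intro cSup_least) auto
  ultimately show ?thesis using assms(1) \<open>x \<in> X\<close> by auto
qed

lemma continuous_op_powr_Sup_le:
  assumes "continuous_op S" "0 < \<upsilon>" "0 < \<tau>"
    and "X \<subseteq> {0..1}" "X \<noteq> {}" "Y \<subseteq> {0..1}" "Y \<noteq> {}"
    and "\<And>x y. x \<in> X \<Longrightarrow> y \<in> Y \<Longrightarrow> S (x powr \<upsilon>) (y powr \<tau>) \<le> K"
  shows "S (Sup X powr \<upsilon>) (Sup Y powr \<tau>) \<le> K"
proof -
  have powr_cont: "continuous_on {0..1} (\<lambda>x::real. x powr e)" if "0 < e" for e
    using that by (intro continuous_on_powr') auto
  have powr_range: "(\<lambda>x::real. x powr e) ` {0..1} \<subseteq> {0..1}" if "0 < e" for e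
    using that by (auto intro!: powr_le1)
  have y_powr: "y powr \<tau> \<in> {0..1}" if "y \<in> Y" for y
    using that assms(3,6) by (intro powr_in_unit_interval) auto
  have Sup_X_powr: "Sup X powr \<upsilon> \<in> {0..1}"
    using Sup_in_unit_interval[OF assms(4,5)] assms(2) by (intro powr_in_unit_interval) auto
  have "S (Sup X powr \<upsilon>) (y powr \<tau>) \<le> K" if "y \<in> Y" for y
  proof (rule continuous_on_Sup_le[OF _ assms(4,5)])
    show "continuous_on {0..1} (\<lambda>x. S (x powr \<upsilon>) (y powr \<tau>))"
      using y_powr[OF that]
      by (intro continuous_op_compose[OF assms(1) powr_cont[OF assms(2)] continuous_on_const
            powr_range[OF assms(2)]]) auto
  qed (use that assms(8) in blast)
  moreover have "continuous_on {0..1} (\<lambda>y. S (Sup X powr \<upsilon>) (y powr \<tau>))"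
    using Sup_X_powr
    by (intro continuous_op_compose[OF assms(1) continuous_on_const powr_cont[OF assms(3)] _
          powr_range[OF assms(3)]]) auto
  ultimately show ?thesis
    using continuous_on_Sup_le[OF _ assms(6,7)] by blast
qed

lemma normalized_monotone_measure_le_one:
  assumes "monotone_measure M m" "m (space M) = 1" "A \<in> sets M"
  shows "m A \<le> 1"
proof -
  have "m A \<le> m (space M)"
    using assms(1,3) sets.top sets.sets_into_space[OF assms(3)]
    unfolding monotone_measure_def by blast
  thus ?thesis using assms(2) by simp
qed

lemma normalized_monotone_measure_range:
  assumes "monotone_measure M m" "m (space M) = 1" "A \<in> sets M"
  shows "enn2real (m A) \<in> {0..1}"
  using normalized_monotone_measure_le_one[OF assms] by (auto intro: enn2real_leI)

lemma normalized_monotone_measure_mono: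
  assumes "monotone_measure M m" "m (space M) = 1" "A \<in> sets M" "B \<in> sets M" "A \<subseteq> B"
  shows "enn2real (m A) \<le> enn2real (m B)"
proof (rule enn2real_mono)
  show "m A \<le> m B"
    using assms(1,3-5) unfolding monotone_measure_def by blast
  show "m B < top"
    using normalized_monotone_measure_le_one[OF assms(1,2,4)]
    by (simp add: order.strict_trans1 ennreal_one_less_top)
qed

lemma I_sc_level_range:
  assumes "semicopula S" "monotone_measure M m" "m (space M) = 1"
    and "h \<in> borel_measurable M" "t \<in> {0..1}"
  shows "S t (enn2real (m {x \<in> space M. t \<le> h x})) \<in> {0..1}"
proof -
  have "{x \<in> space M. t \<le> h x} \<in> sets M"
    using assms(4) by measurable
  thus ?thesis
    using assms(1-3,5) normalized_monotone_measure_range semicopula_range by blast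
qed

lemma I_sc_upper:
  assumes "semicopula S" "monotone_measure M m" "m (space M) = 1"
    and "h \<in> borel_measurable M" "t \<in> {0..1}"
  shows "S t (enn2real (m {x \<in> space M. t \<le> h x})) \<le> I_sc S M m h"
  unfolding I_sc_def
proof (rule cSUP_upper[OF assms(5)])
  show "bdd_above ((\<lambda>t. S t (enn2real (m {x \<in> space M. t \<le> h x}))) ` {0..1})"
    using I_sc_level_range[OF assms(1-4)] by (intro bdd_aboveI[where M=1]) auto
qed

lemma semicopula_measure_nested_le_Int:
  assumes "semicopula S" "monotone_measure M m" "m (space M) = 1"
    and "A \<in> sets M" "B \<in> sets M" "A \<subseteq> B \<or> B \<subseteq> A"
  shows "S (enn2real (m A)) (enn2real (m B)) \<le> enn2real (m (A \<inter> B))"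
proof -
  have "S (enn2real (m A)) (enn2real (m B)) \<le> min (enn2real (m A)) (enn2real (m B))"
    using assms(1-5) by (intro semicopula_le_min normalized_monotone_measure_range)
  with assms(6) show ?thesis
    by (auto simp: Int_absorb1 Int_absorb2)
qed

lemma comonotone_level_sets_nested:
  fixes f g :: "'a \<Rightarrow> real"
  assumes "comonotone X f g"
  shows "{x \<in> X. a \<le> f x} \<subseteq> {x \<in> X. b \<le> g x} \<or> {x \<in> X. b \<le> g x} \<subseteq> {x \<in> X. a \<le> f x}"
proof (rule ccontr)
  assume "\<not> ?thesis"
  then obtain x y where "x \<in> X" "a \<le> f x" "\<not> b \<le> g x" and "y \<in> X" "b \<le> g y" "\<not> a \<le> f y"
    by blast
  hence "(f x - f y) * (g x - g y) < 0"
    by (intro mult_pos_neg) auto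
  with assms \<open>x \<in> X\<close> \<open>y \<in> X\<close> show False
    unfolding comonotone_def by force
qed

lemma powr_level_set_eq:
  fixes f :: "'a \<Rightarrow> real"
  assumes "0 < \<beta>" "0 \<le> s" "\<And>x. x \<in> X \<Longrightarrow> 0 \<le> f x"
  shows "{x \<in> X. s \<le> f x powr \<beta>} = {x \<in> X. s powr (1/\<beta>) \<le> f x}"
proof -
  have "s \<le> y powr \<beta> \<longleftrightarrow> s powr (1/\<beta>) \<le> y" if "0 \<le> y" for y
  proof
    assume level: "s \<le> y powr \<beta>"
    have "s powr (1/\<beta>) \<le> (y powr \<beta>) powr (1/\<beta>)"
      by (rule powr_mono2) (use assms(1,2) level in auto)
    thus "s powr (1/\<beta>) \<le> y"
      using assms(1) that by (simp add: powr_powr)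
  next
    assume level: "s powr (1/\<beta>) \<le> y"
    have "(s powr (1/\<beta>)) powr \<beta> \<le> y powr \<beta>"
      by (rule powr_mono2) (use assms(1) level in auto)
    thus "s \<le> y powr \<beta>"
      using assms(1,2) by (simp add: powr_powr)
  qed
  thus ?thesis using assms(3) by blast
qed

lemma level_product_le_I_sc:
  fixes f g :: "'a \<Rightarrow> real"
  assumes S: "tnorm S" "continuous_op S" "superdistributive_pow \<alpha> S"
    and exps: "0 < \<alpha>" "\<alpha> \<le> \<beta>" "\<alpha> \<le> \<gamma>"
    and fg: "f \<in> F01 M" "g \<in> F01 M" "comonotone (space M) f g"
    and m: "monotone_measure M m" "m (space M) = 1"
    and su: "s \<in> {0..1}" "u \<in> {0..1}"
  shows "S (S s (enn2real (m {x \<in> space M. s \<le> f x powr \<beta>})))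
           (S u (enn2real (m {x \<in> space M. u \<le> g x powr \<gamma>})))
         \<le> I_sc S M m (\<lambda>x. (S (f x) (g x)) powr \<alpha>)"
proof -
  note SC = tnorm_semicopula[OF S(1)]
  define s' u' where "s' = s powr (1/\<beta>)" and "u' = u powr (1/\<gamma>)"
  define t where "t = (S s' u') powr \<alpha>"
  define LF LG LH where "LF = {x \<in> space M. s' \<le> f x}" and "LG = {x \<in> space M. u' \<le> g x}"
    and "LH = {x \<in> space M. t \<le> (S (f x) (g x)) powr \<alpha>}"
  define p q where "p = enn2real (m LF)" and "q = enn2real (m LG)"
  have f01: "f x \<in> {0..1}" "g x \<in> {0..1}" if "x \<in> space M" for x
    using fg(1,2) that unfolding F01_def by auto
  have fg_meas: "f \<in> borel_measurable M" "g \<in> borel_measurable M"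
    using fg(1,2) unfolding F01_def by auto
  have H_meas: "(\<lambda>x. (S (f x) (g x)) powr \<alpha>) \<in> borel_measurable M"
    using continuous_op_measurable[OF S(2) fg(1,2)] by measurable
  have sets: "LF \<in> sets M" "LG \<in> sets M" "LH \<in> sets M"
    unfolding LF_def LG_def LH_def using fg_meas H_meas by measurable
  have "0 < \<beta>" "0 < \<gamma>"
    using exps by linarith+
  hence level_eqs: "{x \<in> space M. s \<le> f x powr \<beta>} = LF" "{x \<in> space M. u \<le> g x powr \<gamma>} = LG"
    unfolding LF_def LG_def s'_def u'_def using su f01
    by (simp_all add: powr_level_set_eq[of _ s "space M" f] powr_level_set_eq[of _ u "space M" g])
  have pq: "p \<in> {0..1}" "q \<in> {0..1}"
    unfolding p_def q_def using sets m normalized_monotone_measure_range by blast+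
  have s'u': "s' \<in> {0..1}" "u' \<in> {0..1}"
    unfolding s'_def u'_def using su \<open>0 < \<beta>\<close> \<open>0 < \<gamma>\<close> by (auto intro!: powr_le1)
  hence t: "t \<in> {0..1}"
    unfolding t_def using exps(1) semicopula_range[OF SC] by (auto intro!: powr_le1)
  have "S p q \<le> enn2real (m (LF \<inter> LG))"
    unfolding p_def q_def using sets comonotone_level_sets_nested[OF fg(3), of s' u']
    by (intro semicopula_measure_nested_le_Int[OF SC m]) (simp_all add: LF_def LG_def)
  also have "\<dots> \<le> enn2real (m LH)"
  proof (rule normalized_monotone_measure_mono[OF m])
    show "LF \<inter> LG \<in> sets M" "LH \<in> sets M" using sets by auto
    show "LF \<inter> LG \<subseteq> LH"
    proof
      fix x assume x: "x \<in> LF \<inter> LG"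
      hence "S s' u' \<le> S (f x) (g x)"
        using s'u' f01 unfolding LF_def LG_def by (auto intro: semicopula_mono[OF SC])
      hence "t \<le> (S (f x) (g x)) powr \<alpha>"
        unfolding t_def using exps(1) semicopula_range[OF SC s'u'] by (auto intro: powr_mono2)
      thus "x \<in> LH" using x unfolding LF_def LH_def by auto
    qed
  qed
  finally have pq_le: "S p q \<le> enn2real (m LH)" .
  have "S (S s p) (S u q) = S (S s u) (S p q)"
    using tnorm_swap_middle[OF S(1) su(1) pq(1) su(2) pq(2)] .
  also have "\<dots> \<le> S t (enn2real (m LH))"
    using superdistributive_pow_root_bound[OF SC S(3) exps su] pq_le t su pq
      semicopula_range[OF SC] normalized_monotone_measure_range[OF m sets(3)]
    unfolding t_def s'_def u'_def by (intro semicopula_mono[OF SC]) auto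
  also have "\<dots> \<le> I_sc S M m (\<lambda>x. (S (f x) (g x)) powr \<alpha>)"
    unfolding LH_def using I_sc_upper[OF SC m H_meas t] .
  finally show ?thesis
    unfolding level_eqs p_def q_def .
qed

lemma level_product_powr_le_I_sc_powr:
  fixes f g :: "'a \<Rightarrow> real"
  assumes S: "tnorm S" "continuous_op S" "superdistributive_pow \<alpha> S"
    and dom: "dominates (\<lambda>x y. (S x y) powr lam) S"
    and exps: "0 < \<alpha>" "\<alpha> \<le> \<beta>" "\<alpha> \<le> \<gamma>" "0 < lam" "lam \<le> \<upsilon>" "lam \<le> \<tau>"
    and fg: "f \<in> F01 M" "g \<in> F01 M" "comonotone (space M) f g"
    and m: "monotone_measure M m" "m (space M) = 1"
    and su: "s \<in> {0..1}" "u \<in> {0..1}"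
  shows "S ((S s (enn2real (m {x \<in> space M. s \<le> f x powr \<beta>}))) powr \<upsilon>)
           ((S u (enn2real (m {x \<in> space M. u \<le> g x powr \<gamma>}))) powr \<tau>)
         \<le> I_sc S M m (\<lambda>x. (S (f x) (g x)) powr \<alpha>) powr lam"
proof -
  note SC = tnorm_semicopula[OF S(1)]
  define a c where "a = S s (enn2real (m {x \<in> space M. s \<le> f x powr \<beta>}))"
    and "c = S u (enn2real (m {x \<in> space M. u \<le> g x powr \<gamma>}))"
  have "f \<in> borel_measurable M" "g \<in> borel_measurable M"
    using fg(1,2) unfolding F01_def by auto
  hence ac: "a \<in> {0..1}" "c \<in> {0..1}"
    unfolding a_def c_def using I_sc_level_range[OF SC m _ su(1)] I_sc_level_range[OF SC m _ su(2)]
    by simp_all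
  have "S (a powr \<upsilon>) (c powr \<tau>) \<le> (S a c) powr lam"
    using dominates_powr_le[OF SC dom exps(4-6) ac] .
  also have "\<dots> \<le> I_sc S M m (\<lambda>x. (S (f x) (g x)) powr \<alpha>) powr lam"
  proof (rule powr_mono2)
    show "S a c \<le> I_sc S M m (\<lambda>x. (S (f x) (g x)) powr \<alpha>)"
      unfolding a_def c_def using level_product_le_I_sc[OF S exps(1-3) fg m su] .
  qed (use semicopula_range[OF SC ac] exps(4) in auto)
  finally show ?thesis
    unfolding a_def c_def .
qed

theorem corollary3p16:
  fixes M :: "'a measure" and f g :: "'a \<Rightarrow> real"
    and star S :: "real \<Rightarrow> real \<Rightarrow> real"
    and \<alpha> \<beta> \<gamma> lam \<upsilon> \<tau> :: real
  assumes "f \<in> F01 M" and "g \<in> F01 M"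
    and "comonotone (space M) f g"
    and "continuous_op star" and "nondecreasing_op star"
    and "tnorm S" and "continuous_op S"
    and "\<alpha> > 0" "\<beta> > 0" "\<gamma> > 0" "lam > 0" "\<upsilon> > 0" "\<tau> > 0"
    and "\<alpha> * lam \<le> 1" and "1 \<le> \<beta> * \<upsilon>" and "1 \<le> \<gamma> * \<tau>"
    and "lam \<le> \<tau>" and "lam \<le> \<upsilon>" and "\<alpha> \<le> \<beta>" and "\<alpha> \<le> \<gamma>"
    and "superdistributive_pow \<alpha> S"
    and "dominates (\<lambda>x y. (S x y) powr lam) S"
  shows "\<forall>m. monotone_measure M m \<and> m (space M) = 1 \<longrightarrow>
           (I_sc S M m (\<lambda>x. (S (f x) (g x)) powr \<alpha>)) powr lam \<ge>
           S ((I_sc S M m (\<lambda>x. f x powr \<beta>)) powr \<upsilon>) ((I_sc S M m (\<lambda>x. g x powr \<gamma>)) powr \<tau>)"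
proof (intro allI impI, elim conjE)
  fix m assume m: "monotone_measure M m" "m (space M) = 1"
  define F G where "F x = f x powr \<beta>" and "G x = g x powr \<gamma>" for x
  define \<phi>F \<phi>G where "\<phi>F t = S t (enn2real (m {x \<in> space M. t \<le> F x}))"
    and "\<phi>G t = S t (enn2real (m {x \<in> space M. t \<le> G x}))" for t
  have "f \<in> borel_measurable M" "g \<in> borel_measurable M"
    using assms(1,2) unfolding F01_def by auto
  hence "F \<in> borel_measurable M" "G \<in> borel_measurable M"
    unfolding F_def G_def by measurable
  hence ranges: "\<phi>F ` {0..1} \<subseteq> {0..1}" "\<phi>G ` {0..1} \<subseteq> {0..1}"
    unfolding \<phi>F_def \<phi>G_def using I_sc_level_range[OF tnorm_semicopula[OF assms(6)] m] by blast+
  have bound: "S (a powr \<upsilon>) (c powr \<tau>) \<le> I_sc S M m (\<lambda>x. (S (f x) (g x)) powr \<alpha>) powr lam"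
    if "a \<in> \<phi>F ` {0..1}" "c \<in> \<phi>G ` {0..1}" for a c
    using that level_product_powr_le_I_sc_powr[OF assms(6,7,21,22,8,19,20,11,18,17,1-3) m]
    unfolding \<phi>F_def \<phi>G_def F_def G_def by blast
  have "S (Sup (\<phi>F ` {0..1}) powr \<upsilon>) (Sup (\<phi>G ` {0..1}) powr \<tau>)
        \<le> I_sc S M m (\<lambda>x. (S (f x) (g x)) powr \<alpha>) powr lam"
    by (rule continuous_op_powr_Sup_le[OF assms(7,12,13) ranges(1) _ ranges(2) _ bound]) auto
  thus "S (I_sc S M m (\<lambda>x. f x powr \<beta>) powr \<upsilon>) (I_sc S M m (\<lambda>x. g x powr \<gamma>) powr \<tau>)
        \<le> I_sc S M m (\<lambda>x. (S (f x) (g x)) powr \<alpha>) powr lam"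
    unfolding I_sc_def \<phi>F_def \<phi>G_def F_def G_def .
qed

end
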